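(* Let $n$ be a positive integer and let $f$ be an $n$-variable Boolean function. Let $g$ be an $n$-variable Boolean function achieving ${FAI}(f)$, i.e. $g\in{AN}^c(f)$, $g\neq 1$ and $\deg(g)+\deg(f\cdot g)={FAI}(f)$. Then $\deg(g)\le\left\lfloor\frac{{FAI}(f)}{2}\right\rfloor$ and $\deg(f\cdot g)\ge\left\lceil\frac{{FAI}(f)}{2}\right\rceil$.
   Context: An $n$-variable Boolean function is a map $\mathbb{F}_2^n\to\mathbb{F}_2$, with algebraic degree $\deg$ the degree of its algebraic normal form. ${AN}^c(f)$ is the set of $n$-variable Boolean functions $g$ with $f\cdot g\neq 0$ (pointwise product). The fast algebraic immunity ${FAI}(f)$ is the minimum of $\deg(g)+\deg(f\cdot g)$ over $g\in{AN}^c(f)$, $g\neq 1$. *)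

theory Defs
  imports Main
begin

text \<open>Points of F_2^n are encoded by their supports: a set x \<subseteq> {..<n}
  stands for the vector with x_i = 1 iff i \<in> x.  An n-variable Boolean
  function is a predicate on such sets, required to be False outside the
  domain (so that equality of functions is equality on F_2^n).\<close>

definition boolfun :: "nat \<Rightarrow> (nat set \<Rightarrow> bool) set" where
  "boolfun n = {f. \<forall>x. \<not> x \<subseteq> {..<n} \<longrightarrow> \<not> f x}"

definition bf_one :: "nat \<Rightarrow> nat set \<Rightarrow> bool" where
  "bf_one n = (\<lambda>x. x \<subseteq> {..<n})"

definition bf_zero :: "nat set \<Rightarrow> bool" where
  "bf_zero = (\<lambda>x. False)"

definition bf_mult :: "(nat set \<Rightarrow> bool) \<Rightarrow> (nat set \<Rightarrow> bool) \<Rightarrow> nat set \<Rightarrow> bool" where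
  "bf_mult f g = (\<lambda>x. f x \<and> g x)"

text \<open>An ANF with coefficient predicate a (a u means the monomial
  prod_{i in u} x_i occurs) represents f iff for every point x, f x is the
  XOR (parity) of the monomials x^u = [u \<subseteq> x] with a u.\<close>

definition anf_represents :: "nat \<Rightarrow> (nat set \<Rightarrow> bool) \<Rightarrow> (nat set \<Rightarrow> bool) \<Rightarrow> bool" where
  "anf_represents n a f \<longleftrightarrow>
     (\<forall>u. a u \<longrightarrow> u \<subseteq> {..<n}) \<and>
     (\<forall>x. x \<subseteq> {..<n} \<longrightarrow> f x = odd (card {u. u \<subseteq> x \<and> a u}))"

definition alg_deg :: "nat \<Rightarrow> (nat set \<Rightarrow> bool) \<Rightarrow> nat" where
  "alg_deg n f = (LEAST d. \<exists>a. anf_represents n a f \<and> (\<forall>u. a u \<longrightarrow> card u \<le> d))"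

definition ANc :: "nat \<Rightarrow> (nat set \<Rightarrow> bool) \<Rightarrow> (nat set \<Rightarrow> bool) set" where
  "ANc n f = {g \<in> boolfun n. bf_mult f g \<noteq> bf_zero}"

definition FAI :: "nat \<Rightarrow> (nat set \<Rightarrow> bool) \<Rightarrow> nat" where
  "FAI n f = (LEAST k. \<exists>g. g \<in> ANc n f \<and> g \<noteq> bf_one n \<and>
                             k = alg_deg n g + alg_deg n (bf_mult f g))"

end

theory Submission
  imports Defs
begin

text \<open>The product h = f g is itself a competitor in the definition of FAI(f):
  it lies in AN^c(f), differs from 1, and satisfies f h = h.  Hence
  FAI(f) \<le> 2 deg(h), and deg(g) = FAI(f) - deg(h) is at most FAI(f)/2.\<close>

lemma bf_mult_left_idem: "bf_mult f (bf_mult f g) = bf_mult f g"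
  unfolding bf_mult_def by auto

lemma bf_mult_in_boolfun: "g \<in> boolfun n \<Longrightarrow> bf_mult f g \<in> boolfun n"
  unfolding boolfun_def bf_mult_def by auto

lemma bf_mult_ne_one:
  assumes "g \<in> boolfun n" and "g \<noteq> bf_one n"
  shows "bf_mult f g \<noteq> bf_one n"
proof
  assume "bf_mult f g = bf_one n"
  then have "g x" if "x \<subseteq> {..<n}" for x
    using that unfolding bf_mult_def bf_one_def by metis
  then have "g = bf_one n"
    using assms(1) unfolding boolfun_def bf_one_def by (intro ext) blast
  with assms(2) show False ..
qed

lemma bf_mult_in_ANc:
  assumes "g \<in> ANc n f"
  shows "bf_mult f g \<in> ANc n f"
  using assms bf_mult_in_boolfun unfolding ANc_def by (auto simp: bf_mult_left_idem)

lemma FAI_le: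
  assumes "g \<in> ANc n f" and "g \<noteq> bf_one n"
  shows "FAI n f \<le> alg_deg n g + alg_deg n (bf_mult f g)"
  unfolding FAI_def by (rule Least_le) (use assms in blast)

lemma FAI_le_twice_alg_deg_mult:
  assumes "g \<in> ANc n f" and "g \<noteq> bf_one n"
  shows "FAI n f \<le> 2 * alg_deg n (bf_mult f g)"
proof -
  have "g \<in> boolfun n"
    using assms(1) unfolding ANc_def by simp
  then have "bf_mult f g \<noteq> bf_one n"
    using assms(2) by (rule bf_mult_ne_one)
  with bf_mult_in_ANc[OF assms(1)] show ?thesis
    using FAI_le[of "bf_mult f g" n f] by (simp add: bf_mult_left_idem)
qed

theorem proposition4:
  fixes n :: nat and f g :: "nat set \<Rightarrow> bool"
  assumes "n > 0"
    and "f \<in> boolfun n"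
    and "g \<in> ANc n f"
    and "g \<noteq> bf_one n"
    and "alg_deg n g + alg_deg n (bf_mult f g) = FAI n f"
  shows "alg_deg n g \<le> FAI n f div 2 \<and> alg_deg n (bf_mult f g) \<ge> (FAI n f + 1) div 2"
  using FAI_le_twice_alg_deg_mult[OF assms(3,4)] assms(5) by linarith

end
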